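(* Let $S_{r,N}$ be an atomic exponential Puiseux semiring with $r\notin\mathbb{N}$, and let $x\in S_{r,N}$. Then $x$ has a unique factorization $z_{\min}$ of minimum length, and for every $z\in\mathsf{Z}(x)$ there exist factorizations $z=z_1,z_2,\dots,z_k=z_{\min}$ in $\mathsf{Z}(x)$ such that, for each $i\in\{1,\dots,k-1\}$, $z_{i+1}$ is obtained from $z_i$ by replacing $\mathsf{n}(r)^{\delta_m}$ copies of the atom $r^{s_m}$ by $\mathsf{d}(r)^{\delta_m}$ copies of $r^{s_{m+1}}$ or vice versa (for some $m\in\mathbb{N}$), and $|z_i|-|z_{i+1}|=|\mathsf{n}(r)^{\delta_m}-\mathsf{d}(r)^{\delta_m}|$. If moreover $r>1$, then $x$ has a unique factorization $z_{\max}$ of maximum length, and for every $z\in\mathsf{Z}(x)$ there are factorizations $z=z_1,\dots,z_k=z_{\max}$ in $\mathsf{Z}(x)$, each obtained from the previous by such a replacement, with $|z_{i+1}|-|z_i|=|\mathsf{n}(r)^{\delta_m}-\mathsf{d}(r)^{\delta_m}|$ for some $m\in\mathbb{N}$ depending on $i$.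
   Context: $\mathbb{N}=\{0,1,2,\dots\}$. A numerical monoid $N$ is an additive submonoid of $\mathbb{N}$ with finite complement in $\mathbb{N}$. For $r\in\mathbb{Q}_{>0}$ write $r=\mathsf{n}(r)/\mathsf{d}(r)$ with $\mathsf{n}(r),\mathsf{d}(r)$ coprime positive integers. The exponential Puiseux semiring $S_{r,N}$ is the additive submonoid of $\mathbb{Q}_{\ge 0}$ generated by $\{r^k: k\in N\}$. Let $s_0<s_1<\cdots$ be the elements of $N$ in increasing order and $\delta_n=s_{n+1}-s_n$. For $r\notin\mathbb{N}$, $S_{r,N}$ is atomic iff $\mathsf{n}(r)>1$, and then its atoms are exactly $r^{s}$, $s\in N$; note the identity $\mathsf{n}(r)^{\delta_m}r^{s_m}=\mathsf{d}(r)^{\delta_m}r^{s_{m+1}}$. For an atomic monoid, $\mathsf{Z}(x)$ denotes the set of factorizations of $x$ (formal sums of atoms, i.e. elements of the free commutative monoid on the atoms, whose evaluation is $x$) and $|z|$ the length (number of atoms counted with multiplicity) of a factorization $z$. *)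

theory Defs
  imports Complex_Main "HOL-Library.Multiset" "HOL-Library.Infinite_Set"
begin

definition numerical_monoid :: "nat set \<Rightarrow> bool" where
  "numerical_monoid N \<longleftrightarrow> 0 \<in> N \<and> (\<forall>a\<in>N. \<forall>b\<in>N. a + b \<in> N) \<and> finite (UNIV - N)"

definition numr :: "rat \<Rightarrow> nat" where "numr r = nat (fst (quotient_of r))"
definition denr :: "rat \<Rightarrow> nat" where "denr r = nat (snd (quotient_of r))"

definition puiseux :: "rat \<Rightarrow> nat set \<Rightarrow> rat set" where
  "puiseux r N = {sum_mset (image_mset (\<lambda>k. r ^ k) M) | M. set_mset M \<subseteq> N}"

definition atoms :: "rat set \<Rightarrow> rat set" where
  "atoms S = {a \<in> S. a \<noteq> 0 \<and> (\<forall>b\<in>S. \<forall>c\<in>S. a = b + c \<longrightarrow> b = 0 \<or> c = 0)}"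

definition atomic :: "rat set \<Rightarrow> bool" where
  "atomic S \<longleftrightarrow> (\<forall>x\<in>S. x \<noteq> 0 \<longrightarrow> (\<exists>M. set_mset M \<subseteq> atoms S \<and> sum_mset M = x))"

(* factorizations: formal sums (multisets) of atoms evaluating to x; length = size *)
definition factorizations :: "rat set \<Rightarrow> rat \<Rightarrow> rat multiset set" where
  "factorizations S x = {z. set_mset z \<subseteq> atoms S \<and> sum_mset z = x}"

definition sseq :: "nat set \<Rightarrow> nat \<Rightarrow> nat" where
  "sseq N n = Infinite_Set.enumerate N n"

definition delta :: "nat set \<Rightarrow> nat \<Rightarrow> nat" where
  "delta N m = sseq N (Suc m) - sseq N m"

definition replacement :: "rat \<Rightarrow> nat set \<Rightarrow> nat \<Rightarrow> rat multiset \<Rightarrow> rat multiset \<Rightarrow> bool" where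
  "replacement r N m z z' \<longleftrightarrow>
     (let A = replicate_mset (numr r ^ delta N m) (r ^ sseq N m);
          B = replicate_mset (denr r ^ delta N m) (r ^ sseq N (Suc m))
      in (A \<subseteq># z \<and> z' = z - A + B) \<or> (B \<subseteq># z \<and> z' = z - B + A))"

definition step_down :: "rat \<Rightarrow> nat set \<Rightarrow> rat multiset \<Rightarrow> rat multiset \<Rightarrow> bool" where
  "step_down r N z z' \<longleftrightarrow> (\<exists>m. replacement r N m z z' \<and>
     int (size z) - int (size z') = \<bar>int (numr r ^ delta N m) - int (denr r ^ delta N m)\<bar>)"

definition step_up :: "rat \<Rightarrow> nat set \<Rightarrow> rat multiset \<Rightarrow> rat multiset \<Rightarrow> bool" where
  "step_up r N z z' \<longleftrightarrow> (\<exists>m. replacement r N m z z' \<and>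
     int (size z') - int (size z) = \<bar>int (numr r ^ delta N m) - int (denr r ^ delta N m)\<bar>)"

definition chain_in :: "'a set \<Rightarrow> ('a \<Rightarrow> 'a \<Rightarrow> bool) \<Rightarrow> 'a \<Rightarrow> 'a \<Rightarrow> bool" where
  "chain_in F R z w \<longleftrightarrow> (\<exists>zs. zs \<noteq> [] \<and> hd zs = z \<and> last zs = w \<and> set zs \<subseteq> F \<and>
      (\<forall>i. Suc i < length zs \<longrightarrow> R (zs ! i) (zs ! Suc i)))"

end

theory Submission
  imports Defs
begin

(*
  For n = n(r), d = d(r) the identity n^\<delta> r^s_m = d^\<delta> r^s_(m+1) lets one trade a block of
  n^\<delta> copies of r^s_m for d^\<delta> copies of r^s_(m+1) and back. Trading in the direction that
  shortens a factorization (upwards if r > 1, downwards if r < 1) terminates in a factorization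
  where no such block occurs, and such a reduced factorization is unique: cancelling the common part
  of two of them and looking at the least (resp. greatest) exponent that survives, the two
  multiplicities of that power of r differ by r^\<delta> times an element of \<int>[1/d] (resp. by r^-\<delta>
  times an element of \<int>[1/n]), so by coprimality they agree modulo n^\<delta> (resp. d^\<delta>), hence
  agree, a contradiction. For r > 1 all atoms are at least 1, so the length is bounded by x and
  the length-increasing trades terminate as well, at the unique factorization free of the upper
  blocks.
*)

lemma chain_in_refl: "z \<in> F \<Longrightarrow> chain_in F R z z"
  unfolding chain_in_def by (rule exI[of _ "[z]"]) auto

lemma chain_in_Cons:
  assumes "z \<in> F" "R z z'" "chain_in F R z' w"
  shows "chain_in F R z w"
proof -
  obtain zs where zs: "zs \<noteq> []" "hd zs = z'" "last zs = w" "set zs \<subseteq> F"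
    "\<forall>i. Suc i < length zs \<longrightarrow> R (zs ! i) (zs ! Suc i)"
    using assms(3) unfolding chain_in_def by blast
  have "\<forall>i. Suc i < length (z # zs) \<longrightarrow> R ((z # zs) ! i) ((z # zs) ! Suc i)"
  proof (intro allI impI)
    fix i assume "Suc i < length (z # zs)"
    then show "R ((z # zs) ! i) ((z # zs) ! Suc i)"
      using zs assms(2) by (cases i) (auto simp: hd_conv_nth)
  qed
  then show ?thesis unfolding chain_in_def using zs assms(1)
    by (intro exI[of _ "z # zs"]) auto
qed

lemma chain_in_last_in: "chain_in F R z w \<Longrightarrow> w \<in> F"
  unfolding chain_in_def by auto

lemma chain_in_normal_form:
  fixes f :: "'a \<Rightarrow> nat"
  assumes "z \<in> F"
    and descend: "\<And>u. u \<in> F \<Longrightarrow> \<not> P u \<Longrightarrow> \<exists>v\<in>F. R u v \<and> f v < f u"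
  shows "\<exists>w. P w \<and> chain_in F R z w \<and> (w = z \<or> f w < f z)"
  using assms(1)
proof (induction "f z" arbitrary: z rule: less_induct)
  case less
  show ?case
  proof (cases "P z")
    case True
    with less.prems show ?thesis by (auto intro: chain_in_refl)
  next
    case False
    then obtain v where v: "v \<in> F" "R z v" "f v < f z"
      using descend less.prems by blast
    then obtain w where "P w" "chain_in F R v w" "w = v \<or> f w < f v"
      using less.hyps by blast
    with v less.prems show ?thesis by (auto intro: chain_in_Cons)
  qed
qed

lemma chain_in_unique_normal_form:
  fixes f :: "'a \<Rightarrow> nat"
  assumes "z0 \<in> F"
    and descend: "\<And>u. u \<in> F \<Longrightarrow> \<not> P u \<Longrightarrow> \<exists>v\<in>F. R u v \<and> f v < f u"
    and unique: "\<And>u v. u \<in> F \<Longrightarrow> v \<in> F \<Longrightarrow> P u \<Longrightarrow> P v \<Longrightarrow> u = v"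
  shows "\<exists>w\<in>F. \<forall>z\<in>F. chain_in F R z w \<and> (z = w \<or> f w < f z)"
proof -
  obtain w where w: "P w" "chain_in F R z0 w"
    using chain_in_normal_form[OF assms(1,2)] by blast
  have wF: "w \<in> F" using chain_in_last_in[OF w(2)] .
  have "chain_in F R z w \<and> (z = w \<or> f w < f z)" if z: "z \<in> F" for z
  proof -
    obtain w' where w': "P w'" "chain_in F R z w'" "w' = z \<or> f w' < f z"
      using chain_in_normal_form[OF z descend] by blast
    have "w' = w" using unique[OF chain_in_last_in[OF w'(2)] wF w'(1) w(1)] .
    with w' show ?thesis by auto
  qed
  with wF show ?thesis by blast
qed

definition adic_rats :: "nat \<Rightarrow> rat set" where
  "adic_rats b = {q. \<exists>L::nat. \<exists>Q::int. q * of_nat b ^ L = of_int Q}"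

lemma adic_rats_0: "0 \<in> adic_rats b"
  unfolding adic_rats_def by (intro CollectI exI[of _ 0]) simp

lemma adic_rats_add:
  assumes "p \<in> adic_rats b" "q \<in> adic_rats b"
  shows "p + q \<in> adic_rats b"
proof -
  obtain L1 Q1 where 1: "p * of_nat b ^ L1 = of_int Q1" using assms(1) by (auto simp: adic_rats_def)
  obtain L2 Q2 where 2: "q * of_nat b ^ L2 = of_int Q2" using assms(2) by (auto simp: adic_rats_def)
  have "(p + q) * of_nat b ^ (L1 + L2)
      = (p * of_nat b ^ L1) * of_nat b ^ L2 + (q * of_nat b ^ L2) * of_nat b ^ L1"
    by (simp add: power_add algebra_simps)
  also have "\<dots> = of_int (Q1 * int b ^ L2 + Q2 * int b ^ L1)" by (simp add: 1 2)
  finally show ?thesis unfolding adic_rats_def by blast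
qed

lemma adic_rats_uminus: "q \<in> adic_rats b \<Longrightarrow> - q \<in> adic_rats b"
proof -
  assume "q \<in> adic_rats b"
  then obtain L Q where "q * of_nat b ^ L = of_int Q" by (auto simp: adic_rats_def)
  then have "- q * of_nat b ^ L = of_int (- Q)" by simp
  then show ?thesis unfolding adic_rats_def by blast
qed

lemma adic_rats_diff: "p \<in> adic_rats b \<Longrightarrow> q \<in> adic_rats b \<Longrightarrow> p - q \<in> adic_rats b"
  using adic_rats_add[OF _ adic_rats_uminus] by simp

lemma power_in_adic_rats:
  assumes "\<rho> * of_nat b = of_nat a"
  shows "\<rho> ^ i \<in> adic_rats b"
proof -
  have "\<rho> ^ i * of_nat b ^ i = of_int (int a ^ i)" by (simp add: assms flip: power_mult_distrib)
  then show ?thesis unfolding adic_rats_def by blast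
qed

lemma sum_mset_in_adic_rats_mult:
  assumes "\<rho> * of_nat b = of_nat a" "\<forall>y\<in>#M. \<exists>i. y = c * \<rho> ^ i"
  shows "\<exists>A\<in>adic_rats b. sum_mset M = c * A"
  using assms(2)
proof (induction M)
  case empty
  then show ?case using adic_rats_0 by force
next
  case (add y M)
  then obtain A where A: "A \<in> adic_rats b" "sum_mset M = c * A" by auto
  obtain i where i: "y = c * \<rho> ^ i" using add.prems by auto
  have "\<rho> ^ i + A \<in> adic_rats b" by (rule adic_rats_add[OF power_in_adic_rats[OF assms(1)] A(1)])
  moreover have "sum_mset (add_mset y M) = c * (\<rho> ^ i + A)" using A i by (simp add: algebra_simps)
  ultimately show ?case by blast
qed

lemma power_dvd_of_eq_power_mult_adic:
  assumes "\<rho> * of_nat b = of_nat a" "coprime a b"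
    and "of_int c = \<rho> ^ k * D" "D \<in> adic_rats b"
  shows "int a ^ k dvd c"
proof -
  obtain L Q where L: "D * of_nat b ^ L = of_int Q" using assms(4) unfolding adic_rats_def by blast
  have "(of_int (c * int b ^ (k + L)) :: rat) = (\<rho> * of_nat b) ^ k * (D * of_nat b ^ L)"
    by (simp add: assms(3) power_add power_mult_distrib algebra_simps)
  also have "\<dots> = of_int (int a ^ k * Q)" by (simp add: assms(1) L)
  finally have "int a ^ k dvd c * int b ^ (k + L)" by (simp only: of_int_eq_iff) simp
  moreover have "coprime (int a ^ k) (int b ^ (k + L))" using assms(2) by simp
  ultimately show ?thesis by (simp add: coprime_dvd_mult_left_iff)
qed

lemma eq_if_dvd_diff_less:
  fixes a b c :: nat
  assumes "int c dvd int a - int b" "a < c" "b < c"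
  shows "a = b"
proof (rule ccontr)
  assume "a \<noteq> b"
  then have "\<bar>int c\<bar> \<le> \<bar>int a - int b\<bar>" using assms(1) by (intro dvd_imp_le_int) auto
  with assms(2,3) show False by linarith
qed

lemma sum_mset_diff_swap:
  fixes z w :: "'a::ab_group_add multiset"
  assumes "sum_mset z = sum_mset w"
  shows "sum_mset (z - w) = sum_mset (w - z)"
proof -
  have "sum_mset (z - w) = sum_mset z - sum_mset (z \<inter># w)"
    using sum_mset_diff[of "z \<inter># w" z] by (simp add: diff_intersect_left_idem)
  moreover have "sum_mset (w - z) = sum_mset w - sum_mset (z \<inter># w)"
    using sum_mset_diff[of "z \<inter># w" w] by (simp add: diff_intersect_right_idem)
  ultimately show ?thesis using assms by simp
qed

lemma exchange_submultiset:
  fixes z X Y :: "'a::ab_group_add multiset"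
  assumes "X \<subseteq># z"
  shows "sum_mset (z - X + Y) = sum_mset z - sum_mset X + sum_mset Y"
    and "size (z - X + Y) = size z - size X + size Y"
    and "set_mset (z - X + Y) \<subseteq> set_mset z \<union> set_mset Y"
proof -
  show "sum_mset (z - X + Y) = sum_mset z - sum_mset X + sum_mset Y"
    by (simp only: sum_mset.union sum_mset_diff[OF assms])
  show "size (z - X + Y) = size z - size X + size Y"
    by (simp only: size_union size_Diff_submset[OF assms])
  show "set_mset (z - X + Y) \<subseteq> set_mset z \<union> set_mset Y"
    by (auto dest: in_diffD)
qed

lemma mset_in_image_ex:
  "set_mset z \<subseteq> f ` A \<Longrightarrow> \<exists>M. set_mset M \<subseteq> A \<and> z = image_mset f M"
proof (induction z)
  case empty
  then show ?case by (intro exI[of _ "{#}"]) auto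
next
  case (add y z)
  then obtain M where M: "set_mset M \<subseteq> A" "z = image_mset f M" by auto
  obtain a where a: "a \<in> A" "y = f a" using add.prems by auto
  show ?case using M a by (intro exI[of _ "add_mset a M"]) auto
qed

lemma
  assumes "infinite N"
  shows sseq_in: "sseq N m \<in> N"
    and sseq_Suc: "sseq N (Suc m) = sseq N m + delta N m"
    and delta_pos: "0 < delta N m"
  using enumerate_in_set[OF assms] enumerate_step[OF assms, of m]
  unfolding sseq_def delta_def by auto

lemma sseq_0: "0 \<in> N \<Longrightarrow> sseq N 0 = 0"
  unfolding sseq_def enumerate_0 by (simp add: Least_eq_0)

lemma sseq_surj: "infinite N \<Longrightarrow> k \<in> N \<Longrightarrow> \<exists>m. sseq N m = k"
  unfolding sseq_def using enumerate_Ex by blast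

lemma sseq_Suc_le:
  assumes "infinite N" "k \<in> N" "sseq N m < k"
  shows "sseq N (Suc m) \<le> k"
proof -
  obtain j where j: "sseq N j = k" using sseq_surj assms(1,2) by blast
  with assms(3) have "m < j" using enumerate_mono_iff[OF assms(1)] unfolding sseq_def by metis
  with j show ?thesis using enumerate_mono_le_iff[OF assms(1)] unfolding sseq_def by (metis Suc_leI)
qed

lemma le_sseq_if_less_Suc:
  assumes "infinite N" "k \<in> N" "k < sseq N (Suc m)"
  shows "k \<le> sseq N m"
  using sseq_Suc_le[OF assms(1,2), of m] assms(3) by (meson not_le)

lemma sum_mset_split_count:
  fixes P :: "'a::comm_semiring_1 multiset"
  shows "sum_mset P = of_nat (count P a) * a + sum_mset (filter_mset (\<lambda>y. y \<noteq> a) P)"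
proof -
  have "sum_mset P = sum_mset (filter_mset (\<lambda>y. y = a) P) + sum_mset (filter_mset (\<lambda>y. y \<noteq> a) P)"
    by (simp flip: sum_mset.union)
  then show ?thesis by (simp add: filter_eq_replicate_mset sum_mset_replicate_mset)
qed

locale exp_puiseux =
  fixes r :: rat and N :: "nat set"
  assumes numerical: "numerical_monoid N" and r_pos: "0 < r" and r_not_nat: "r \<notin> \<nat>"
begin

abbreviation gens :: "rat set" where "gens \<equiv> (\<lambda>k. r ^ k) ` N"

lemma quotient_of_r:
  obtains p q where "quotient_of r = (p, q)" "0 < p" "0 < q" "q \<noteq> 1" "coprime p q"
    "r = of_int p / of_int q"
proof -
  obtain p q where pq: "quotient_of r = (p, q)" by (cases "quotient_of r")
  have q: "0 < q" "coprime p q" "r = of_int p / of_int q"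
    using quotient_of_denom_pos[OF pq] quotient_of_coprime[OF pq] quotient_of_div[OF pq] by auto
  with r_pos have "0 < p" by (simp add: zero_less_divide_iff)
  moreover have "q \<noteq> 1"
  proof
    assume "q = 1"
    with q \<open>0 < p\<close> have "r = of_nat (nat p)" by simp
    with r_not_nat show False by simp
  qed
  ultimately show thesis using that pq q by blast
qed

lemma r_mult_denr: "r * of_nat (denr r) = of_nat (numr r)"
  by (rule quotient_of_r) (simp add: numr_def denr_def)

lemma coprime_numr_denr: "coprime (numr r) (denr r)"
  by (rule quotient_of_r) (simp add: numr_def denr_def coprime_int_iff[symmetric])

lemma numr_pos: "0 < numr r"
  by (rule quotient_of_r) (simp add: numr_def)

lemma denr_ge_2: "2 \<le> denr r"
  by (rule quotient_of_r) (simp add: denr_def)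

lemma numr_ne_denr: "numr r \<noteq> denr r"
  using coprime_numr_denr denr_ge_2 by auto

lemma infinite_N: "infinite N"
proof
  assume "finite N"
  moreover have "finite (UNIV - N)" using numerical by (simp add: numerical_monoid_def)
  ultimately have "finite (N \<union> (UNIV - N))" by blast
  then show False by simp
qed

lemma zero_in_N: "0 \<in> N"
  using numerical by (simp add: numerical_monoid_def)

lemma power_r_eq_iff: "r ^ i = r ^ j \<longleftrightarrow> i = j"
  using r_mult_denr numr_ne_denr r_pos by (intro power_inject_exp') auto

lemma block_sum_eq:
  "of_nat (numr r ^ delta N m) * r ^ sseq N m = of_nat (denr r ^ delta N m) * r ^ sseq N (Suc m)"
  by (simp add: sseq_Suc[OF infinite_N] power_add power_mult_distrib algebra_simps
      flip: r_mult_denr)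

lemma puiseux_eq: "puiseux r N = {sum_mset z | z. set_mset z \<subseteq> gens}"
proof safe
  fix y assume "y \<in> puiseux r N"
  then obtain M where "set_mset M \<subseteq> N" "y = sum_mset (image_mset (\<lambda>k. r ^ k) M)"
    unfolding puiseux_def by blast
  then show "\<exists>z. y = sum_mset z \<and> set_mset z \<subseteq> gens"
    by (intro exI[of _ "image_mset (\<lambda>k. r ^ k) M"]) auto
next
  fix z assume "set_mset z \<subseteq> gens"
  then obtain M where "set_mset M \<subseteq> N" "z = image_mset (\<lambda>k. r ^ k) M"
    using mset_in_image_ex by blast
  then show "sum_mset z \<in> puiseux r N" unfolding puiseux_def by blast
qed

lemma gens_subset_puiseux: "gens \<subseteq> puiseux r N"
  unfolding puiseux_eq by (force intro: exI[of _ "{#_#}"])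

lemma sum_mset_gens_pos: "set_mset z \<subseteq> gens \<Longrightarrow> z \<noteq> {#} \<Longrightarrow> 0 < sum_mset z"
proof (induction z)
  case (add y z)
  then have "0 < y" using r_pos by auto
  moreover have "0 \<le> sum_mset z"
    using add r_pos by (cases "z = {#}") (auto intro: less_imp_le)
  ultimately show ?case by simp
qed simp

lemma atoms_subset_gens: "atoms (puiseux r N) \<subseteq> gens"
proof
  fix a assume a: "a \<in> atoms (puiseux r N)"
  then obtain z where z: "set_mset z \<subseteq> gens" "a = sum_mset z" unfolding atoms_def puiseux_eq by blast
  then obtain y where y: "y \<in># z" using a unfolding atoms_def by fastforce
  let ?z = "z - {#y#}"
  have z': "set_mset ?z \<subseteq> gens" using z(1) by (meson in_diffD subset_iff)
  have "a = y + sum_mset ?z" using z(2) y by (simp add: sum_mset.remove)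
  moreover have "y \<in> puiseux r N" "y \<noteq> 0" using y z(1) gens_subset_puiseux r_pos by auto
  moreover have "sum_mset ?z \<in> puiseux r N" using z' unfolding puiseux_eq by blast
  ultimately have "sum_mset ?z = 0" using a unfolding atoms_def by blast
  then have "?z = {#}" using sum_mset_gens_pos[OF z'] by fastforce
  then have "z = {#y#}" using y by (metis insert_DiffM add_mset_add_single add_0)
  then show "a \<in> gens" using y z by simp
qed

lemma two_le_numr_if_atomic:
  assumes "atomic (puiseux r N)"
  shows "2 \<le> numr r"
proof (rule ccontr)
  assume "\<not> 2 \<le> numr r"
  then have n1: "numr r = 1" using numr_pos by simp
  have "1 \<in> puiseux r N" using gens_subset_puiseux zero_in_N by force
  then obtain M where "set_mset M \<subseteq> atoms (puiseux r N)" "sum_mset M = 1"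
    using assms unfolding atomic_def by force
  then obtain a where a: "a \<in> atoms (puiseux r N)" by fastforce
  then obtain k where "k \<in> N" "a = r ^ k" using atoms_subset_gens by blast
  then obtain m where a_eq: "a = r ^ sseq N m" using sseq_surj[OF infinite_N] by metis
  define b where "b = r ^ sseq N (Suc m)"
  define e where "e = denr r ^ delta N m"
  have "denr r \<le> e" unfolding e_def using denr_ge_2 delta_pos[OF infinite_N]
    by (intro self_le_power) auto
  with denr_ge_2 have e: "2 \<le> e" by simp
  have "a = b + of_nat (e - 1) * b"
    using block_sum_eq[of m] e by (simp add: a_eq b_def e_def n1 of_nat_diff algebra_simps)
  moreover have "b \<in> puiseux r N"
    unfolding b_def using gens_subset_puiseux sseq_in[OF infinite_N] by blast
  moreover have "of_nat (e - 1) * b \<in> puiseux r N"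
    unfolding puiseux_eq b_def using sseq_in[OF infinite_N]
    by (intro CollectI exI[of _ "replicate_mset (e - 1) b"]) (auto simp: b_def sum_mset_replicate_mset)
  moreover have "b \<noteq> 0" "of_nat (e - 1) * b \<noteq> 0" using e r_pos by (auto simp: b_def)
  ultimately show False using a unfolding atoms_def by blast
qed

(*
  Powers r^k with k \<ge> s_(m+1) are r^s_(m+1) times elements of \<int>[1/d]; since r^s_(m+1) =
  r^\<delta> r^s_m with r^\<delta> = n^\<delta>/d^\<delta>, equal sums force n^\<delta> to divide the difference of the
  multiplicities of r^s_m. Dually with 1/r = d/n below s_(m+1).
*)
lemma sum_mset_above:
  assumes "\<forall>y\<in>#P. \<exists>k\<in>N. sseq N m \<le> k \<and> y = r ^ k"
  shows "\<exists>A\<in>adic_rats (denr r).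
    sum_mset P = of_nat (count P (r ^ sseq N m)) * r ^ sseq N m + r ^ sseq N (Suc m) * A"
proof -
  have "\<forall>y\<in>#filter_mset (\<lambda>y. y \<noteq> r ^ sseq N m) P. \<exists>i. y = r ^ sseq N (Suc m) * r ^ i"
  proof
    fix y assume "y \<in># filter_mset (\<lambda>y. y \<noteq> r ^ sseq N m) P"
    then obtain k where k: "k \<in> N" "sseq N m < k" "y = r ^ k" using assms by force
    then have "sseq N (Suc m) \<le> k" using sseq_Suc_le[OF infinite_N] by blast
    with k(3) show "\<exists>i. y = r ^ sseq N (Suc m) * r ^ i"
      by (metis le_add_diff_inverse power_add)
  qed
  then obtain A where "A \<in> adic_rats (denr r)"
      "sum_mset (filter_mset (\<lambda>y. y \<noteq> r ^ sseq N m) P) = r ^ sseq N (Suc m) * A"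
    using sum_mset_in_adic_rats_mult[OF r_mult_denr] by blast
  then show ?thesis using sum_mset_split_count[of P "r ^ sseq N m"] by (intro bexI) simp_all
qed

lemma numr_power_dvd_count_diff:
  assumes "\<forall>y\<in>#P. \<exists>k\<in>N. sseq N m \<le> k \<and> y = r ^ k"
    and "\<forall>y\<in>#Q. \<exists>k\<in>N. sseq N m \<le> k \<and> y = r ^ k"
    and "sum_mset P = sum_mset Q"
  shows "int (numr r) ^ delta N m dvd int (count P (r ^ sseq N m)) - int (count Q (r ^ sseq N m))"
proof -
  let ?a = "r ^ sseq N m"
  obtain A where A: "A \<in> adic_rats (denr r)"
    "sum_mset P = of_nat (count P ?a) * ?a + r ^ sseq N (Suc m) * A"
    using sum_mset_above[OF assms(1)] by blast
  obtain B where B: "B \<in> adic_rats (denr r)"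
    "sum_mset Q = of_nat (count Q ?a) * ?a + r ^ sseq N (Suc m) * B"
    using sum_mset_above[OF assms(2)] by blast
  have "?a * of_int (int (count P ?a) - int (count Q ?a)) = ?a * (r ^ delta N m * (B - A))"
    using A(2) B(2) assms(3) by (simp add: sseq_Suc[OF infinite_N] power_add algebra_simps)
  then have "of_int (int (count P ?a) - int (count Q ?a)) = r ^ delta N m * (B - A)"
    using r_pos by simp
  then show ?thesis
    by (rule power_dvd_of_eq_power_mult_adic[OF r_mult_denr coprime_numr_denr _ adic_rats_diff[OF B(1) A(1)]])
qed

lemma inverse_r_mult_numr: "inverse r * of_nat (numr r) = of_nat (denr r)"
  using r_pos by (simp flip: r_mult_denr)

lemma sum_mset_below:
  assumes "\<forall>y\<in>#P. \<exists>k\<in>N. k \<le> sseq N (Suc m) \<and> y = r ^ k"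
  shows "\<exists>A\<in>adic_rats (numr r).
    sum_mset P = of_nat (count P (r ^ sseq N (Suc m))) * r ^ sseq N (Suc m) + r ^ sseq N m * A"
proof -
  have "\<forall>y\<in>#filter_mset (\<lambda>y. y \<noteq> r ^ sseq N (Suc m)) P. \<exists>i. y = r ^ sseq N m * inverse r ^ i"
  proof
    fix y assume "y \<in># filter_mset (\<lambda>y. y \<noteq> r ^ sseq N (Suc m)) P"
    then obtain k where k: "k \<in> N" "k < sseq N (Suc m)" "y = r ^ k" using assms by force
    then have "k \<le> sseq N m" using le_sseq_if_less_Suc[OF infinite_N] by blast
    then have "r ^ sseq N m * inverse r ^ (sseq N m - k) = r ^ k"
      using r_pos by (simp add: power_diff power_inverse)
    with k(3) show "\<exists>i. y = r ^ sseq N m * inverse r ^ i" by metis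
  qed
  then obtain A where "A \<in> adic_rats (numr r)"
      "sum_mset (filter_mset (\<lambda>y. y \<noteq> r ^ sseq N (Suc m)) P) = r ^ sseq N m * A"
    using sum_mset_in_adic_rats_mult[OF inverse_r_mult_numr] by blast
  then show ?thesis using sum_mset_split_count[of P "r ^ sseq N (Suc m)"] by (intro bexI) simp_all
qed

lemma denr_power_dvd_count_diff:
  assumes "\<forall>y\<in>#P. \<exists>k\<in>N. k \<le> sseq N (Suc m) \<and> y = r ^ k"
    and "\<forall>y\<in>#Q. \<exists>k\<in>N. k \<le> sseq N (Suc m) \<and> y = r ^ k"
    and "sum_mset P = sum_mset Q"
  shows "int (denr r) ^ delta N m dvd
    int (count P (r ^ sseq N (Suc m))) - int (count Q (r ^ sseq N (Suc m)))"
proof -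
  let ?a = "r ^ sseq N (Suc m)"
  obtain A where A: "A \<in> adic_rats (numr r)"
    "sum_mset P = of_nat (count P ?a) * ?a + r ^ sseq N m * A"
    using sum_mset_below[OF assms(1)] by blast
  obtain B where B: "B \<in> adic_rats (numr r)"
    "sum_mset Q = of_nat (count Q ?a) * ?a + r ^ sseq N m * B"
    using sum_mset_below[OF assms(2)] by blast
  have "r ^ sseq N m * (r ^ delta N m * of_int (int (count P ?a) - int (count Q ?a)))
      = r ^ sseq N m * (B - A)"
    using A(2) B(2) assms(3) by (simp add: sseq_Suc[OF infinite_N] power_add algebra_simps)
  then have "r ^ delta N m * of_int (int (count P ?a) - int (count Q ?a)) = B - A"
    using r_pos by simp
  then have "of_int (int (count P ?a) - int (count Q ?a)) = inverse r ^ delta N m * (B - A)"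
    using r_pos by (simp add: power_inverse field_simps)
  moreover have "coprime (denr r) (numr r)" using coprime_numr_denr by (simp add: coprime_commute)
  ultimately show ?thesis
    using power_dvd_of_eq_power_mult_adic[OF inverse_r_mult_numr _ _ adic_rats_diff[OF B(1) A(1)]]
    by blast
qed

definition lo_reduced :: "rat multiset \<Rightarrow> bool" where
  "lo_reduced z \<longleftrightarrow> (\<forall>m. count z (r ^ sseq N m) < numr r ^ delta N m)"

definition hi_reduced :: "rat multiset \<Rightarrow> bool" where
  "hi_reduced z \<longleftrightarrow> (\<forall>m. count z (r ^ sseq N (Suc m)) < denr r ^ delta N m)"

lemma lo_reduced_unique:
  assumes z: "set_mset z \<subseteq> gens" and w: "set_mset w \<subseteq> gens"
    and "lo_reduced z" "lo_reduced w" and sums: "sum_mset z = sum_mset w"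
  shows "z = w"
proof (rule ccontr)
  assume "z \<noteq> w"
  define z' w' where "z' = z - w" and "w' = w - z"
  have "z' + w' \<noteq> {#}"
    using \<open>z \<noteq> w\<close> unfolding z'_def w'_def by (auto simp: Diff_eq_empty_iff_mset)
  then obtain y where y: "y \<in># z' + w'" by (meson multiset_nonemptyE)
  have gens': "set_mset (z' + w') \<subseteq> gens"
    using z w unfolding z'_def w'_def by (auto dest: in_diffD)
  define K where "K = {k \<in> N. r ^ k \<in># z' + w'}"
  have "\<exists>k. k \<in> K" using y gens' unfolding K_def by auto
  then have k0: "(LEAST k. k \<in> K) \<in> K" by (rule LeastI_ex)
  then obtain m where m: "sseq N m = (LEAST k. k \<in> K)"
    using sseq_surj[OF infinite_N] unfolding K_def by blast
  have above: "\<forall>y\<in>#z' + w'. \<exists>k\<in>N. sseq N m \<le> k \<and> y = r ^ k"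
    using gens' Least_le[of "\<lambda>k. k \<in> K"] unfolding m K_def by fastforce
  let ?a = "r ^ sseq N m"
  have "int (numr r) ^ delta N m dvd int (count z' ?a) - int (count w' ?a)"
    using above sum_mset_diff_swap[OF sums] unfolding z'_def w'_def
    by (intro numr_power_dvd_count_diff) auto
  moreover have "count z' ?a < numr r ^ delta N m" "count w' ?a < numr r ^ delta N m"
    using assms(3,4) unfolding lo_reduced_def z'_def w'_def by (auto simp: less_imp_diff_less)
  ultimately have "count z' ?a = count w' ?a" by (intro eq_if_dvd_diff_less) simp_all
  moreover have "?a \<in># z' + w'" using k0 m unfolding K_def by simp
  ultimately show False unfolding z'_def w'_def by (auto simp: in_diff_count)
qed

lemma hi_reduced_unique:
  assumes z: "set_mset z \<subseteq> gens" and w: "set_mset w \<subseteq> gens"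
    and "hi_reduced z" "hi_reduced w" and sums: "sum_mset z = sum_mset w"
  shows "z = w"
proof (rule ccontr)
  assume "z \<noteq> w"
  define z' w' where "z' = z - w" and "w' = w - z"
  have "z' + w' \<noteq> {#}"
    using \<open>z \<noteq> w\<close> unfolding z'_def w'_def by (auto simp: Diff_eq_empty_iff_mset)
  then obtain y where y: "y \<in># z' + w'" by (meson multiset_nonemptyE)
  have gens': "set_mset (z' + w') \<subseteq> gens"
    using z w unfolding z'_def w'_def by (auto dest: in_diffD)
  define K where "K = {k \<in> N. r ^ k \<in># z' + w'}"
  have "K \<subseteq> (\<lambda>k. r ^ k) -` set_mset (z' + w')" unfolding K_def by auto
  moreover have "finite ((\<lambda>k. r ^ k) -` set_mset (z' + w'))"
    using power_r_eq_iff by (intro finite_vimageI) (auto intro: injI)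
  ultimately have "finite K" by (rule finite_subset)
  moreover have "K \<noteq> {}" using y gens' unfolding K_def by auto
  ultimately have k1: "Max K \<in> K" "\<forall>k\<in>K. k \<le> Max K" by simp_all
  then obtain j where j: "sseq N j = Max K"
    using sseq_surj[OF infinite_N] unfolding K_def by blast
  have below: "\<forall>y\<in>#z' + w'. \<exists>k\<in>N. k \<le> sseq N j \<and> y = r ^ k"
    using gens' k1(2) unfolding j K_def by fastforce
  let ?a = "r ^ sseq N j"
  have "count z' ?a = count w' ?a"
  proof (cases j)
    case 0
    \<comment> \<open>hi_reduced does not bound the multiplicity of r^s_0 = 1, but here every element is 1\<close>
    then have "\<forall>y\<in>#z' + w'. y = 1" using below sseq_0[OF zero_in_N] by auto
    then have "filter_mset (\<lambda>y. y \<noteq> 1) z' = {#}" "filter_mset (\<lambda>y. y \<noteq> 1) w' = {#}"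
      by auto
    then have "of_nat (count z' 1) = (of_nat (count w' 1) :: rat)"
      using sum_mset_split_count[of z' 1] sum_mset_split_count[of w' 1] sum_mset_diff_swap[OF sums]
      unfolding z'_def w'_def by simp
    with 0 show ?thesis using sseq_0[OF zero_in_N] by simp
  next
    case (Suc m)
    have "int (denr r) ^ delta N m dvd int (count z' ?a) - int (count w' ?a)"
      using below sum_mset_diff_swap[OF sums] unfolding z'_def w'_def Suc
      by (intro denr_power_dvd_count_diff) auto
    moreover have "count z' ?a < denr r ^ delta N m" "count w' ?a < denr r ^ delta N m"
      using assms(3,4) unfolding hi_reduced_def z'_def w'_def Suc by (auto simp: less_imp_diff_less)
    ultimately show ?thesis by (intro eq_if_dvd_diff_less) simp_all
  qed
  moreover have "?a \<in># z' + w'" using k1 j unfolding K_def by simp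
  ultimately show False unfolding z'_def w'_def by (auto simp: in_diff_count)
qed

lemma one_less_r_iff: "1 < r \<longleftrightarrow> denr r < numr r"
proof -
  have "0 < denr r" using denr_ge_2 by simp
  then have "1 < r \<longleftrightarrow> of_nat (denr r) < r * of_nat (denr r)" by simp
  then show ?thesis by (simp add: r_mult_denr)
qed

lemma power_delta_less: "a < b \<Longrightarrow> a ^ delta N m < (b::nat) ^ delta N m"
  using delta_pos[OF infinite_N] by (intro power_strict_mono) simp_all

lemma two_le_power_delta: "2 \<le> a \<Longrightarrow> 2 \<le> (a::nat) ^ delta N m"
  using self_le_power[of a "delta N m"] delta_pos[OF infinite_N] by simp

definition lo_block :: "nat \<Rightarrow> rat multiset" where
  "lo_block m = replicate_mset (numr r ^ delta N m) (r ^ sseq N m)"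

definition hi_block :: "nat \<Rightarrow> rat multiset" where
  "hi_block m = replicate_mset (denr r ^ delta N m) (r ^ sseq N (Suc m))"

lemma sum_mset_lo_block_eq_hi_block: "sum_mset (lo_block m) = sum_mset (hi_block m)"
  using block_sum_eq[of m] by (simp add: lo_block_def hi_block_def sum_mset_replicate_mset)

lemma not_lo_reduced_iff: "\<not> lo_reduced z \<longleftrightarrow> (\<exists>m. lo_block m \<subseteq># z)"
  by (auto simp: lo_reduced_def lo_block_def count_le_replicate_mset_subset_eq not_less)

lemma not_hi_reduced_iff: "\<not> hi_reduced z \<longleftrightarrow> (\<exists>m. hi_block m \<subseteq># z)"
  by (auto simp: hi_reduced_def hi_block_def count_le_replicate_mset_subset_eq not_less)

lemma lo_hi_exchange:
  assumes "set_mset z \<subseteq> gens" "lo_block m \<subseteq># z"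
  defines "z' \<equiv> z - lo_block m + hi_block m"
  shows "replacement r N m z z'" "set_mset z' \<subseteq> gens" "sum_mset z' = sum_mset z"
    "size z' = size z - numr r ^ delta N m + denr r ^ delta N m" "numr r ^ delta N m \<le> size z"
proof -
  note ex = exchange_submultiset[OF assms(2), of "hi_block m", folded z'_def]
  show "replacement r N m z z'"
    using assms(2) unfolding replacement_def Let_def z'_def lo_block_def[symmetric] hi_block_def[symmetric]
    by simp
  show "set_mset z' \<subseteq> gens"
  proof -
    have "set_mset (hi_block m) \<subseteq> gens"
      using sseq_in[OF infinite_N, of "Suc m"] by (auto simp: hi_block_def)
    with ex(3) assms(1) show ?thesis by blast
  qed
  show "sum_mset z' = sum_mset z"
    using ex(1) sum_mset_lo_block_eq_hi_block[of m] by simp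
  show "size z' = size z - numr r ^ delta N m + denr r ^ delta N m"
    using ex(2) by (simp add: lo_block_def hi_block_def)
  show "numr r ^ delta N m \<le> size z"
    using size_mset_mono[OF assms(2)] by (simp add: lo_block_def)
qed

lemma hi_lo_exchange:
  assumes "set_mset z \<subseteq> gens" "hi_block m \<subseteq># z"
  defines "z' \<equiv> z - hi_block m + lo_block m"
  shows "replacement r N m z z'" "set_mset z' \<subseteq> gens" "sum_mset z' = sum_mset z"
    "size z' = size z - denr r ^ delta N m + numr r ^ delta N m" "denr r ^ delta N m \<le> size z"
proof -
  note ex = exchange_submultiset[OF assms(2), of "lo_block m", folded z'_def]
  show "replacement r N m z z'"
    using assms(2) unfolding replacement_def Let_def z'_def lo_block_def[symmetric] hi_block_def[symmetric]
    by simp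
  show "set_mset z' \<subseteq> gens"
  proof -
    have "set_mset (lo_block m) \<subseteq> gens"
      using sseq_in[OF infinite_N, of m] by (auto simp: lo_block_def)
    with ex(3) assms(1) show ?thesis by blast
  qed
  show "sum_mset z' = sum_mset z"
    using ex(1) sum_mset_lo_block_eq_hi_block[of m] by simp
  show "size z' = size z - denr r ^ delta N m + numr r ^ delta N m"
    using ex(2) by (simp add: lo_block_def hi_block_def)
  show "denr r ^ delta N m \<le> size z"
    using size_mset_mono[OF assms(2)] by (simp add: hi_block_def)
qed

(* trading a lo_block for a hi_block shortens a factorization iff r > 1 *)
definition min_reduced :: "rat multiset \<Rightarrow> bool" where
  "min_reduced z \<longleftrightarrow> (if denr r < numr r then lo_reduced z else hi_reduced z)"

lemma min_reduced_unique:
  "set_mset z \<subseteq> gens \<Longrightarrow> set_mset w \<subseteq> gens \<Longrightarrow> min_reduced z \<Longrightarrow> min_reduced w \<Longrightarrow>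
    sum_mset z = sum_mset w \<Longrightarrow> z = w"
  unfolding min_reduced_def using lo_reduced_unique hi_reduced_unique by (auto split: if_splits)

lemma step_up_exists:
  assumes "1 < r" "set_mset z \<subseteq> gens" "\<not> hi_reduced z"
  shows "\<exists>z'. step_up r N z z' \<and> set_mset z' \<subseteq> gens \<and> sum_mset z' = sum_mset z \<and> size z < size z'"
proof -
  obtain m where m: "hi_block m \<subseteq># z" using assms(3) not_hi_reduced_iff by blast
  have lt: "denr r ^ delta N m < numr r ^ delta N m"
    using assms(1) one_less_r_iff power_delta_less by blast
  then have "int (denr r) ^ delta N m < int (numr r) ^ delta N m"
    by (metis of_nat_less_iff of_nat_power)
  moreover note ex = hi_lo_exchange[OF assms(2) m]
  ultimately have "step_up r N z (z - hi_block m + lo_block m)"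
    unfolding step_up_def by (intro exI[of _ m]) auto
  with ex lt show ?thesis by (intro exI[of _ "z - hi_block m + lo_block m"]) auto
qed

lemma size_le_sum_mset_if_one_less_r:
  "1 < r \<Longrightarrow> set_mset z \<subseteq> gens \<Longrightarrow> of_nat (size z) \<le> sum_mset z"
  by (induction z) (auto intro: add_mono one_le_power)

end

locale atomic_exp_puiseux = exp_puiseux +
  assumes numr_ge_2: "2 \<le> numr r"
begin

lemma step_down_exists:
  assumes "set_mset z \<subseteq> gens" "\<not> min_reduced z"
  shows "\<exists>z'. step_down r N z z' \<and> set_mset z' \<subseteq> gens \<and> sum_mset z' = sum_mset z \<and>
    size z' < size z \<and> 2 \<le> size z'"
proof (cases "denr r < numr r")
  case True
  then obtain m where m: "lo_block m \<subseteq># z"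
    using assms(2) not_lo_reduced_iff unfolding min_reduced_def by auto
  have lt: "denr r ^ delta N m < numr r ^ delta N m" using True power_delta_less by blast
  then have "int (denr r) ^ delta N m < int (numr r) ^ delta N m"
    by (metis of_nat_less_iff of_nat_power)
  moreover note ex = lo_hi_exchange[OF assms(1) m]
  ultimately have "step_down r N z (z - lo_block m + hi_block m)"
    unfolding step_down_def by (intro exI[of _ m]) auto
  with ex lt two_le_power_delta[OF denr_ge_2, of m] show ?thesis
    by (intro exI[of _ "z - lo_block m + hi_block m"]) auto
next
  case False
  then have "numr r < denr r" using numr_ne_denr by simp
  obtain m where m: "hi_block m \<subseteq># z"
    using assms(2) False not_hi_reduced_iff unfolding min_reduced_def by auto
  have lt: "numr r ^ delta N m < denr r ^ delta N m"
    using \<open>numr r < denr r\<close> power_delta_less by blast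
  then have "int (numr r) ^ delta N m < int (denr r) ^ delta N m"
    by (metis of_nat_less_iff of_nat_power)
  moreover note ex = hi_lo_exchange[OF assms(1) m]
  ultimately have "step_down r N z (z - hi_block m + lo_block m)"
    unfolding step_down_def by (intro exI[of _ m]) auto
  with ex lt two_le_power_delta[OF numr_ge_2, of m] show ?thesis
    by (intro exI[of _ "z - hi_block m + lo_block m"]) auto
qed

(*
  A splitting y = b + c yields a factorization of length \<ge> 2. Shortening trades never go below
  length 2, so they end in a min_reduced factorization of y other than {#y#}, which is
  min_reduced too.
*)
lemma atoms_eq_gens: "atoms (puiseux r N) = gens"
proof
  show "gens \<subseteq> atoms (puiseux r N)"
  proof
    fix y assume y: "y \<in> gens"
    have "1 < numr r ^ delta N m" "1 < denr r ^ delta N m" for m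
      using two_le_power_delta[OF numr_ge_2, of m] two_le_power_delta[OF denr_ge_2, of m] by simp_all
    with denr_ge_2 have single_reduced: "min_reduced {#y#}"
      by (auto simp: min_reduced_def lo_reduced_def hi_reduced_def)
    have indecomposable: "b = 0 \<or> c = 0" if bc: "b \<in> puiseux r N" "c \<in> puiseux r N" "y = b + c" for b c
    proof (rule ccontr)
      assume "\<not> (b = 0 \<or> c = 0)"
      moreover obtain zb zc where zbc: "set_mset zb \<subseteq> gens" "b = sum_mset zb"
        "set_mset zc \<subseteq> gens" "c = sum_mset zc"
        using bc(1,2) unfolding puiseux_eq by blast
      ultimately have "2 \<le> size (zb + zc)" by (cases zb; cases zc) auto
      define F where "F = {u. set_mset u \<subseteq> gens \<and> sum_mset u = y \<and> 2 \<le> size u}"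
      have "zb + zc \<in> F"
        using zbc bc(3) \<open>2 \<le> size (zb + zc)\<close> unfolding F_def by auto
      moreover have "\<exists>v\<in>F. step_down r N u v \<and> size v < size u"
        if u: "u \<in> F" "\<not> min_reduced u" for u
      proof -
        obtain v where "step_down r N u v" "set_mset v \<subseteq> gens" "sum_mset v = sum_mset u"
            "size v < size u" "2 \<le> size v"
          using step_down_exists[OF _ u(2)] u(1) unfolding F_def by blast
        with u(1) show ?thesis unfolding F_def by auto
      qed
      ultimately have "\<exists>w. min_reduced w \<and> chain_in F (step_down r N) (zb + zc) w \<and>
          (w = zb + zc \<or> size w < size (zb + zc))"
        by (rule chain_in_normal_form[where f = size])
      then obtain w where w: "min_reduced w" "chain_in F (step_down r N) (zb + zc) w"
        by blast
      have "w \<in> F" using chain_in_last_in[OF w(2)] .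
      then have "w = {#y#}"
        using min_reduced_unique[OF _ _ w(1) single_reduced] y unfolding F_def by simp
      with \<open>w \<in> F\<close> show False unfolding F_def by simp
    qed
    moreover have "y \<in> puiseux r N" "y \<noteq> 0" using y gens_subset_puiseux r_pos by auto
    ultimately show "y \<in> atoms (puiseux r N)" unfolding atoms_def by blast
  qed
qed (rule atoms_subset_gens)

lemma factorizations_eq:
  "factorizations (puiseux r N) x = {z. set_mset z \<subseteq> gens \<and> sum_mset z = x}"
  unfolding factorizations_def atoms_eq_gens ..

theorem min_length_factorization:
  assumes "x \<in> puiseux r N"
  shows "\<exists>zmin\<in>factorizations (puiseux r N) x. \<forall>z\<in>factorizations (puiseux r N) x.
    chain_in (factorizations (puiseux r N) x) (step_down r N) z zmin \<and> (z = zmin \<or> size zmin < size z)"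
proof -
  let ?F = "factorizations (puiseux r N) x"
  obtain z0 where "z0 \<in> ?F" using assms[unfolded puiseux_eq] unfolding factorizations_eq by blast
  moreover have "\<exists>v\<in>?F. step_down r N u v \<and> size v < size u" if u: "u \<in> ?F" "\<not> min_reduced u" for u
  proof -
    obtain v where "step_down r N u v" "set_mset v \<subseteq> gens" "sum_mset v = sum_mset u" "size v < size u"
      using step_down_exists[OF _ u(2)] u(1) unfolding factorizations_eq by blast
    with u(1) show ?thesis unfolding factorizations_eq by auto
  qed
  moreover have "u = v" if "u \<in> ?F" "v \<in> ?F" "min_reduced u" "min_reduced v" for u v
    using min_reduced_unique[of u v] that unfolding factorizations_eq by simp
  ultimately show ?thesis by (rule chain_in_unique_normal_form)
qed

theorem max_length_factorization:
  assumes "x \<in> puiseux r N" "1 < r"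
  shows "\<exists>zmax\<in>factorizations (puiseux r N) x. \<forall>z\<in>factorizations (puiseux r N) x.
    chain_in (factorizations (puiseux r N) x) (step_up r N) z zmax \<and> (z = zmax \<or> size z < size zmax)"
proof -
  let ?F = "factorizations (puiseux r N) x"
  have bounded: "size z \<le> nat \<lfloor>x\<rfloor>" if "z \<in> ?F" for z
  proof -
    have "of_nat (size z) \<le> x"
      using size_le_sum_mset_if_one_less_r[OF assms(2)] that unfolding factorizations_eq by auto
    then have "int (size z) \<le> \<lfloor>x\<rfloor>" by (simp add: le_floor_iff)
    then show ?thesis by (simp add: le_nat_iff)
  qed
  obtain z0 where "z0 \<in> ?F" using assms(1)[unfolded puiseux_eq] unfolding factorizations_eq by blast
  moreover have "\<exists>v\<in>?F. step_up r N u v \<and> nat \<lfloor>x\<rfloor> - size v < nat \<lfloor>x\<rfloor> - size u"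
    if u: "u \<in> ?F" "\<not> hi_reduced u" for u
  proof -
    obtain v where v: "step_up r N u v" "set_mset v \<subseteq> gens" "sum_mset v = sum_mset u" "size u < size v"
      using step_up_exists[OF assms(2) _ u(2)] u(1) unfolding factorizations_eq by blast
    then have "v \<in> ?F" using u(1) unfolding factorizations_eq by simp
    moreover have "size v \<le> nat \<lfloor>x\<rfloor>" using bounded[OF \<open>v \<in> ?F\<close>] .
    ultimately show ?thesis using v(1,4) by (intro bexI[of _ v]) auto
  qed
  moreover have "u = v" if "u \<in> ?F" "v \<in> ?F" "hi_reduced u" "hi_reduced v" for u v
    using hi_reduced_unique[of u v] that unfolding factorizations_eq by simp
  ultimately have "\<exists>zmax\<in>?F. \<forall>z\<in>?F. chain_in ?F (step_up r N) z zmax \<and>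
      (z = zmax \<or> nat \<lfloor>x\<rfloor> - size zmax < nat \<lfloor>x\<rfloor> - size z)"
    by (rule chain_in_unique_normal_form[where f = "\<lambda>z. nat \<lfloor>x\<rfloor> - size z"])
  moreover have "size z < size zmax" if "nat \<lfloor>x\<rfloor> - size zmax < nat \<lfloor>x\<rfloor> - size z" for z zmax :: "rat multiset"
    using that by arith
  ultimately show ?thesis by blast
qed

end

theorem mainTheorem2:
  fixes r :: rat and N :: "nat set" and x :: rat
  assumes "numerical_monoid N"
    and "r > 0"
    and "r \<notin> \<nat>"
    and "atomic (puiseux r N)"
    and "x \<in> puiseux r N"
  shows "(\<exists>zmin \<in> factorizations (puiseux r N) x.
            (\<forall>z \<in> factorizations (puiseux r N) x. size zmin \<le> size z \<and> (size z = size zmin \<longrightarrow> z = zmin)) \<and>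
            (\<forall>z \<in> factorizations (puiseux r N) x.
               chain_in (factorizations (puiseux r N) x) (step_down r N) z zmin))
       \<and> (r > 1 \<longrightarrow>
          (\<exists>zmax \<in> factorizations (puiseux r N) x.
            (\<forall>z \<in> factorizations (puiseux r N) x. size z \<le> size zmax \<and> (size z = size zmax \<longrightarrow> z = zmax)) \<and>
            (\<forall>z \<in> factorizations (puiseux r N) x.
               chain_in (factorizations (puiseux r N) x) (step_up r N) z zmax)))"
proof -
  interpret exp_puiseux r N
    using assms(1-3) by unfold_locales
  interpret atomic_exp_puiseux r N
    using two_le_numr_if_atomic[OF assms(4)] by unfold_locales
  show ?thesis
    using min_length_factorization[OF assms(5)] max_length_factorization[OF assms(5)]
    by (metis less_imp_le nat_less_le order_refl)
qed

end
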